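(* Let $L$ be a finite lattice, $\varphi\in M_1(L)$, and let $(a_1,\dots,a_n)$ be a monotone path in $L$. Set $\varphi_0=\varphi$ and $\varphi_i=\Lambda_{a_i}\varphi_{i-1}$ for $i=1,\dots,n$. Let $\Psi_i\in M_\infty(\mathcal L)$ satisfy $\Pi(\Psi_i)=\lambda(\varphi_i;a_{i+1},\cdot)$ for $i=0,\dots,n-1$, let $\Psi_n\in M_\infty(\mathcal L)$ satisfy $\Pi(\Psi_n)=\varphi_n$, and put $\Phi=\sum_{i=0}^n\Psi_i$. For $x\in L$ and $1\le k\le n$ let $\pi^x_{a_1,\ldots,a_k}$ be the function on $\mathcal L$ equal to $1$ at $V$ if $x\in V$ and $a_i\notin V$ for all $i=1,\dots,k$, and $0$ otherwise. Then $$\Lambda_{a_1,\ldots,a_k}\varphi(x)=\Phi\big(\pi^x_{a_1,\ldots,a_k}\big)\qquad\text{for all }x\in L\text{ and }k=1,\dots,n.$$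
   Context: $L$ is a finite lattice with join $\vee$. $M_1(L)$ is the set of nonnegative monotone real functions on $L$. A path from $a$ to $b$ is a sequence $H=(h_0,\dots,h_m)$ of distinct elements of $L$ with $h_0=a$, $h_m=b$; $\varphi(H)=\sum_{i=0}^m\varphi(h_i)-\sum_{i=1}^m\varphi(h_{i-1}\vee h_i)$; $\lambda(\varphi;a,b)=\max\{\varphi(H): H\text{ a path from }a\text{ to }b\}$; $\Lambda_a\varphi(x)=\varphi(x)-\lambda(\varphi;a,x)$ and $\Lambda_{a_1,\ldots,a_k}\varphi=\Lambda_{a_k}(\Lambda_{a_1,\ldots,a_{k-1}}\varphi)$; $\Lambda_a$ maps $M_1(L)$ into itself and so does $\lambda(\varphi;a,\cdot)$ for $\varphi\in M_1(L)$. A monotone path is a sequence $(a_1,\dots,a_n)$ of distinct elements of $L$ such that $i<j$ whenever $a_i<a_j$. $\mathcal L$ is the set of nonempty up-sets of $L$, ordered by $U\preceq V$ iff $U\supseteq V$ (meet = union). $M_\infty(\mathcal L)$ is the set of nonnegative completely monotone functions on $(\mathcal L,\preceq)$; $\Pi(\Psi)(x)=\Psi(\{y:y\ge x\})$. Every element of $M_1(L)$ is $\Pi(\Psi)$ for some $\Psi\in M_\infty(\mathcal L)$. For $\Phi\in M_\infty(\mathcal L)$ with Möbius inverse $F$ (the unique $F$ with $\Phi(U)=\sum_{V\preceq U}F(V)$) and $g$ a real function on $\mathcal L$, $\Phi(g)=\sum_{V\in\mathcal L}F(V)g(V)$. *)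

theory Defs
  imports Complex_Main
begin

definition M1 :: "('a::{finite,lattice} \<Rightarrow> real) \<Rightarrow> bool" where
  "M1 \<phi> \<longleftrightarrow> (\<forall>x. 0 \<le> \<phi> x) \<and> mono \<phi>"

definition paths :: "'a \<Rightarrow> 'a \<Rightarrow> 'a list set" where
  "paths a b = {H. H \<noteq> [] \<and> distinct H \<and> hd H = a \<and> last H = b}"

definition path_val :: "('a::lattice \<Rightarrow> real) \<Rightarrow> 'a list \<Rightarrow> real" where
  "path_val \<phi> H = (\<Sum>i<length H. \<phi> (H ! i))
      - (\<Sum>i\<in>{1..<length H}. \<phi> (sup (H ! (i - 1)) (H ! i)))"

definition lam :: "('a::{finite,lattice} \<Rightarrow> real) \<Rightarrow> 'a \<Rightarrow> 'a \<Rightarrow> real" where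
  "lam \<phi> a b = Max (path_val \<phi> ` paths a b)"

definition Lam :: "'a::{finite,lattice} \<Rightarrow> ('a \<Rightarrow> real) \<Rightarrow> ('a \<Rightarrow> real)" where
  "Lam a \<phi> = (\<lambda>x. \<phi> x - lam \<phi> a x)"

definition Lam_seq :: "'a::{finite,lattice} list \<Rightarrow> ('a \<Rightarrow> real) \<Rightarrow> ('a \<Rightarrow> real)" where
  "Lam_seq as \<phi> = fold Lam as \<phi>"

definition monotone_path :: "'a::order list \<Rightarrow> bool" where
  "monotone_path as \<longleftrightarrow> distinct as \<and>
     (\<forall>i<length as. \<forall>j<length as. as ! i < as ! j \<longrightarrow> i < j)"

text \<open>Nonempty up-sets of L; the order U \<preceq> V is V \<subseteq> U, meet is union.\<close>
definition upsets :: "'a::order set set" where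
  "upsets = {U. U \<noteq> {} \<and> (\<forall>x\<in>U. \<forall>y. x \<le> y \<longrightarrow> y \<in> U)}"

definition M_inf :: "('a::order set \<Rightarrow> real) \<Rightarrow> bool" where
  "M_inf \<Psi> \<longleftrightarrow> (\<forall>U\<in>upsets. 0 \<le> \<Psi> U) \<and>
     (\<forall>k::nat. k \<ge> 1 \<longrightarrow> (\<forall>Us U. (\<forall>i<k. Us i \<in> upsets) \<and> U \<in> upsets \<and> (\<forall>i<k. U \<subseteq> Us i)
        \<longrightarrow> (\<Sum>I\<in>{I. I \<subseteq> {..<k} \<and> I \<noteq> {}}. (-1) ^ (card I + 1) * \<Psi> (\<Union>i\<in>I. Us i)) \<le> \<Psi> U))"

definition Pi_map :: "('a::order set \<Rightarrow> real) \<Rightarrow> ('a \<Rightarrow> real)" where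
  "Pi_map \<Psi> = (\<lambda>x. \<Psi> {y. x \<le> y})"

definition moebius_inv :: "('a::order set \<Rightarrow> real) \<Rightarrow> ('a set \<Rightarrow> real)" where
  "moebius_inv \<Phi> = (THE F. (\<forall>U\<in>upsets. \<Phi> U = (\<Sum>V\<in>{V\<in>upsets. U \<subseteq> V}. F V))
                        \<and> (\<forall>U. U \<notin> upsets \<longrightarrow> F U = 0))"

definition integ :: "('a::{finite,order} set \<Rightarrow> real) \<Rightarrow> ('a set \<Rightarrow> real) \<Rightarrow> real" where
  "integ \<Phi> g = (\<Sum>V\<in>upsets. moebius_inv \<Phi> V * g V)"

definition pi_fun :: "'a \<Rightarrow> 'a list \<Rightarrow> 'a set \<Rightarrow> real" where
  "pi_fun x as V = (if x \<in> V \<and> (\<forall>a\<in>set as. a \<notin> V) then 1 else 0)"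

end

theory Submission
  imports Defs
begin

text \<open>Write \<open>\<phi>\<^sub>i\<close> for \<open>Lam_seq (take i as) \<phi>\<close>, \<open>\<Pi>\<^sub>i\<close> for \<open>Pi_map (\<Psi> i)\<close> and \<open>F\<^sub>i\<close> for the Moebius
  inverse of \<open>\<Psi> i\<close>. By definition of \<open>Lam\<close>, \<open>\<phi>\<^sub>i = \<Pi>\<^sub>i + \<phi>\<^sub>i\<^sub>+\<^sub>1\<close>, so \<open>\<phi>\<^sub>k\<close> is the sum of the
  \<open>\<Pi>\<^sub>i\<close> with \<open>i \<ge> k\<close>. Complete monotonicity makes every \<open>F\<^sub>i\<close> nonnegative (inclusion-exclusion
  over the up-sets strictly above a given one), and \<open>\<Pi>\<^sub>i x\<close> is the \<open>F\<^sub>i\<close>-mass of the up-sets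
  containing \<open>x\<close>. As \<open>\<phi>\<^sub>j\<^sub>+\<^sub>1 a\<^sub>j = 0\<close>, every \<open>\<Pi>\<^sub>i\<close> with \<open>i > j\<close> vanishes at \<open>a\<^sub>j\<close>, so for \<open>i \<ge> k\<close>
  all of \<open>F\<^sub>i\<close> lives on up-sets avoiding \<open>a\<^sub>1, \<dots>, a\<^sub>k\<close>. For \<open>i < k\<close>, monotonicity of \<open>\<phi>\<^sub>i\<close> gives
  \<open>\<Pi>\<^sub>i (x \<squnion> a\<^sub>i) = lam \<phi>\<^sub>i a\<^sub>i (x \<squnion> a\<^sub>i) = \<phi>\<^sub>i a\<^sub>i = \<Pi>\<^sub>i a\<^sub>i\<close>, so \<open>F\<^sub>i\<close> puts no mass on up-sets
  containing \<open>x\<close> but not \<open>a\<^sub>i\<close>.\<close>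

lemma atLeast_in_upsets: "{x..} \<in> upsets"
  unfolding upsets_def by auto

lemma atLeast_subset_upset_iff: "V \<in> upsets \<Longrightarrow> {x..} \<subseteq> V \<longleftrightarrow> x \<in> V"
  unfolding upsets_def by auto

lemma upset_sup_mem: "V \<in> upsets \<Longrightarrow> (x::'a::lattice) \<in> V \<Longrightarrow> sup x y \<in> V"
  unfolding upsets_def by auto

lemma Union_in_upsets: "I \<noteq> {} \<Longrightarrow> (\<And>i. i \<in> I \<Longrightarrow> U i \<in> upsets) \<Longrightarrow> (\<Union>i\<in>I. U i) \<in> upsets"
  unfolding upsets_def by simp blast

definition zeta :: "('a::order set \<Rightarrow> real) \<Rightarrow> 'a set \<Rightarrow> real" where
  "zeta F U = (\<Sum>V\<in>{V\<in>upsets. U \<subseteq> V}. F V)"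

lemma zeta_eq_add_strict:
  fixes F :: "'a::{finite,order} set \<Rightarrow> real"
  assumes "U \<in> upsets"
  shows "zeta F U = F U + (\<Sum>V\<in>{V\<in>upsets. U \<subset> V}. F V)"
proof -
  have "{V\<in>upsets. U \<subseteq> V} = insert U {V\<in>upsets. U \<subset> V}" using assms by auto
  then show ?thesis unfolding zeta_def by simp
qed

function moebius_rec :: "('a::{finite,order} set \<Rightarrow> real) \<Rightarrow> 'a set \<Rightarrow> real" where
  "moebius_rec \<Psi> U =
     (if U \<in> upsets then \<Psi> U - (\<Sum>V\<in>{V\<in>upsets. U \<subset> V}. moebius_rec \<Psi> V) else 0)"
  by auto
termination by (relation "measure (\<lambda>(\<Psi>, U). card (- U))") (auto intro: psubset_card_mono)

declare moebius_rec.simps [simp del]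

lemma zeta_moebius_rec: "U \<in> upsets \<Longrightarrow> zeta (moebius_rec \<Psi>) U = \<Psi> U"
  by (simp add: zeta_eq_add_strict moebius_rec.simps[of \<Psi> U])

lemma moebius_rec_outside: "U \<notin> upsets \<Longrightarrow> moebius_rec \<Psi> U = 0"
  by (simp add: moebius_rec.simps)

lemma eq_moebius_rec:
  fixes F :: "'a::{finite,order} set \<Rightarrow> real"
  assumes "\<And>U. U \<in> upsets \<Longrightarrow> zeta F U = \<Psi> U" and "\<And>U. U \<notin> upsets \<Longrightarrow> F U = 0"
  shows "F U = moebius_rec \<Psi> U"
proof (induction U rule: measure_induct_rule[of "\<lambda>U. card (- U)"])
  case (less U)
  show ?case
  proof (cases "U \<in> upsets")
    case True
    have "F U = \<Psi> U - (\<Sum>V\<in>{V\<in>upsets. U \<subset> V}. F V)"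
      using assms(1) zeta_eq_add_strict[OF True, of F] True by simp
    also have "\<dots> = moebius_rec \<Psi> U"
      using less True by (simp add: moebius_rec.simps[of \<Psi> U] psubset_card_mono)
    finally show ?thesis .
  qed (simp add: assms(2) moebius_rec_outside)
qed

lemma moebius_inv_eq_moebius_rec: "moebius_inv \<Psi> = moebius_rec \<Psi>"
  unfolding moebius_inv_def zeta_def[symmetric]
proof (rule the_equality)
  show "(\<forall>U\<in>upsets. \<Psi> U = zeta (moebius_rec \<Psi>) U) \<and> (\<forall>U. U \<notin> upsets \<longrightarrow> moebius_rec \<Psi> U = 0)"
    by (simp add: zeta_moebius_rec moebius_rec_outside)
qed (auto intro!: eq_moebius_rec)

lemma zeta_moebius_inv: "(U::'a::{finite,order} set) \<in> upsets \<Longrightarrow> zeta (moebius_inv \<Psi>) U = \<Psi> U"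
  by (simp add: moebius_inv_eq_moebius_rec zeta_moebius_rec)

lemma moebius_inv_outside: "(U::'a::{finite,order} set) \<notin> upsets \<Longrightarrow> moebius_inv \<Psi> U = 0"
  by (simp add: moebius_inv_eq_moebius_rec moebius_rec_outside)

lemma moebius_inv_sum:
  fixes \<Psi> :: "'i \<Rightarrow> 'a::{finite,order} set \<Rightarrow> real"
  shows "moebius_inv (\<lambda>U. \<Sum>i\<in>I. \<Psi> i U) V = (\<Sum>i\<in>I. moebius_inv (\<Psi> i) V)"
  unfolding moebius_inv_eq_moebius_rec
proof (rule eq_moebius_rec[symmetric])
  fix U :: "'a set" assume "U \<in> upsets"
  then show "zeta (\<lambda>V. \<Sum>i\<in>I. moebius_rec (\<Psi> i) V) U = (\<Sum>i\<in>I. \<Psi> i U)"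
    unfolding zeta_def by (subst sum.swap) (simp add: zeta_def[symmetric] zeta_moebius_rec)
qed (simp add: moebius_rec_outside)

lemma integ_sum:
  fixes \<Psi> :: "'i \<Rightarrow> 'a::{finite,order} set \<Rightarrow> real"
  shows "integ (\<lambda>U. \<Sum>i\<in>I. \<Psi> i U) g = (\<Sum>i\<in>I. integ (\<Psi> i) g)"
  unfolding integ_def moebius_inv_sum sum_distrib_right by (rule sum.swap)

lemma M_inf_incl_excl_le:
  fixes k :: nat
  assumes "M_inf \<Psi>" "U \<in> upsets" "\<And>i. i < k \<Longrightarrow> Us i \<in> upsets" "\<And>i. i < k \<Longrightarrow> U \<subseteq> Us i"
  shows "(\<Sum>I | I \<subseteq> {..<k} \<and> I \<noteq> {}. (-1) ^ (card I + 1) * \<Psi> (\<Union>i\<in>I. Us i)) \<le> \<Psi> U"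
proof (cases "k = 0")
  case True
  then show ?thesis using assms(1,2) by (simp add: M_inf_def)
next
  case False
  then show ?thesis using assms unfolding M_inf_def by (simp add: Suc_le_eq)
qed

lemma strict_supersets_incl_excl:
  fixes \<Psi> :: "'a::{finite,order} set \<Rightarrow> real" and k :: nat
  assumes U: "U \<in> upsets" and h: "h ` {..<k} = - U"
  shows "(\<Sum>V | V \<in> upsets \<and> U \<subset> V. moebius_inv \<Psi> V)
    = (\<Sum>I | I \<subseteq> {..<k} \<and> I \<noteq> {}. (-1) ^ (card I + 1) * \<Psi> (\<Union>i\<in>I. U \<union> {h i..}))"
proof -
  define G where "G i = {V\<in>upsets. U \<union> {h i..} \<subseteq> V}" for i
  have "{V\<in>upsets. U \<subset> V} = (\<Union>i<k. G i)"
  proof (intro subset_antisym subsetI)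
    fix V assume V: "V \<in> {V\<in>upsets. U \<subset> V}"
    then obtain z where "z \<in> V" "z \<notin> U" by auto
    then obtain i where "i < k" "h i = z" using h by (metis ComplI imageE lessThan_iff)
    then show "V \<in> (\<Union>i<k. G i)"
      using V \<open>z \<in> V\<close> atLeast_subset_upset_iff unfolding G_def by fastforce
  next
    fix V assume "V \<in> (\<Union>i<k. G i)"
    then obtain i where "i < k" "V \<in> upsets" "U \<union> {h i..} \<subseteq> V" unfolding G_def by auto
    moreover have "h i \<notin> U" using h \<open>i < k\<close> by auto
    ultimately show "V \<in> {V\<in>upsets. U \<subset> V}" by auto
  qed
  then have "(\<Sum>V | V \<in> upsets \<and> U \<subset> V. moebius_inv \<Psi> V) = sum (moebius_inv \<Psi>) (\<Union>i<k. G i)"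
    by simp
  also have "\<dots> = (\<Sum>I | I \<subseteq> {..<k} \<and> I \<noteq> {}. (-1) ^ (card I + 1) * sum (moebius_inv \<Psi>) (\<Inter> (G ` I)))"
    by (rule Incl_Excl_UN) (simp_all add: disjnt_def sum.union_disjoint)
  also have "\<dots> = (\<Sum>I | I \<subseteq> {..<k} \<and> I \<noteq> {}. (-1) ^ (card I + 1) * \<Psi> (\<Union>i\<in>I. U \<union> {h i..}))"
  proof (rule sum.cong[OF refl])
    fix I assume I: "I \<in> {I. I \<subseteq> {..<k} \<and> I \<noteq> {}}"
    then have "\<Inter> (G ` I) = {V\<in>upsets. (\<Union>i\<in>I. U \<union> {h i..}) \<subseteq> V}"
      unfolding G_def by blast
    moreover have "(\<Union>i\<in>I. U \<union> {h i..}) \<in> upsets"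
      using I U by (intro Union_in_upsets) (auto simp: upsets_def)
    ultimately show "(-1) ^ (card I + 1) * sum (moebius_inv \<Psi>) (\<Inter> (G ` I))
        = (-1) ^ (card I + 1) * \<Psi> (\<Union>i\<in>I. U \<union> {h i..})"
      using zeta_moebius_inv unfolding zeta_def by metis
  qed
  finally show ?thesis .
qed

lemma moebius_inv_nonneg:
  fixes \<Psi> :: "'a::{finite,order} set \<Rightarrow> real"
  assumes "M_inf \<Psi>"
  shows "0 \<le> moebius_inv \<Psi> U"
proof (cases "U \<in> upsets")
  case U: True
  obtain h where "bij_betw h {..<card (- U)} (- U)"
    using ex_bij_betw_nat_finite[of "- U"] by (auto simp: atLeast0LessThan)
  then have h: "h ` {..<card (- U)} = - U" by (simp add: bij_betw_def)
  have "(\<Sum>V | V \<in> upsets \<and> U \<subset> V. moebius_inv \<Psi> V) \<le> \<Psi> U"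
    unfolding strict_supersets_incl_excl[OF U h]
    using h U by (intro M_inf_incl_excl_le[OF assms U]) (auto simp: upsets_def)
  then show ?thesis
    using zeta_moebius_inv[OF U, of \<Psi>] zeta_eq_add_strict[OF U] by simp
qed (simp add: moebius_inv_outside)

lemma Pi_map_eq_sum_moebius_inv:
  fixes \<Psi> :: "'a::{finite,order} set \<Rightarrow> real"
  shows "Pi_map \<Psi> x = (\<Sum>V | V \<in> upsets \<and> x \<in> V. moebius_inv \<Psi> V)"
proof -
  have "{V\<in>upsets. {x..} \<subseteq> V} = {V. V \<in> upsets \<and> x \<in> V}"
    using atLeast_subset_upset_iff by blast
  then show ?thesis
    using zeta_moebius_inv[OF atLeast_in_upsets, of \<Psi> x]
    by (simp add: zeta_def Pi_map_def atLeast_def)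
qed

lemma Pi_map_nonneg: "M_inf \<Psi> \<Longrightarrow> 0 \<le> Pi_map (\<Psi>::'a::{finite,order} set \<Rightarrow> real) x"
  unfolding Pi_map_eq_sum_moebius_inv by (intro sum_nonneg moebius_inv_nonneg)

lemma mono_Pi_map: "M_inf \<Psi> \<Longrightarrow> mono (Pi_map (\<Psi>::'a::{finite,order} set \<Rightarrow> real))"
  unfolding Pi_map_eq_sum_moebius_inv
  by (intro monoI sum_mono2 moebius_inv_nonneg) (auto simp: upsets_def)

lemma Pi_map_diff_eq_sum_moebius_inv:
  fixes \<Psi> :: "'a::{finite,order} set \<Rightarrow> real"
  assumes "a \<le> b"
  shows "Pi_map \<Psi> b - Pi_map \<Psi> a = (\<Sum>V | V \<in> upsets \<and> b \<in> V \<and> a \<notin> V. moebius_inv \<Psi> V)"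
proof -
  have "{V. V \<in> upsets \<and> b \<in> V \<and> a \<notin> V} = {V. V \<in> upsets \<and> b \<in> V} - {V. V \<in> upsets \<and> a \<in> V}"
       "{V. V \<in> upsets \<and> a \<in> V} \<subseteq> {V. V \<in> upsets \<and> b \<in> V}"
    using assms by (auto simp: upsets_def)
  then show ?thesis unfolding Pi_map_eq_sum_moebius_inv by (simp add: sum_diff)
qed

lemma moebius_inv_eq_0_if_Pi_map_eq_0:
  fixes \<Psi> :: "'a::{finite,order} set \<Rightarrow> real"
  assumes "M_inf \<Psi>" "Pi_map \<Psi> a = 0" "V \<in> upsets" "a \<in> V"
  shows "moebius_inv \<Psi> V = 0"
  using assms(2-) moebius_inv_nonneg[OF assms(1)]
  unfolding Pi_map_eq_sum_moebius_inv by (subst (asm) sum_nonneg_eq_0_iff) auto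

lemma moebius_inv_eq_0_if_Pi_map_eq:
  fixes \<Psi> :: "'a::{finite,order} set \<Rightarrow> real"
  assumes "M_inf \<Psi>" "a \<le> b" "Pi_map \<Psi> b = Pi_map \<Psi> a" "V \<in> upsets" "b \<in> V" "a \<notin> V"
  shows "moebius_inv \<Psi> V = 0"
proof -
  have "(\<Sum>V | V \<in> upsets \<and> b \<in> V \<and> a \<notin> V. moebius_inv \<Psi> V) = 0"
    using Pi_map_diff_eq_sum_moebius_inv[OF assms(2), of \<Psi>] assms(3) by simp
  then show ?thesis
    using assms(4-) moebius_inv_nonneg[OF assms(1)] by (subst (asm) sum_nonneg_eq_0_iff) auto
qed

lemma integ_pi_fun_eq_0:
  fixes \<Psi> :: "'a::{finite,lattice} set \<Rightarrow> real"
  assumes "M_inf \<Psi>" "a \<in> set A" "Pi_map \<Psi> (sup x a) = Pi_map \<Psi> a"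
  shows "integ \<Psi> (pi_fun x A) = 0"
  unfolding integ_def
proof (intro sum.neutral ballI)
  fix V :: "'a set" assume V: "V \<in> upsets"
  show "moebius_inv \<Psi> V * pi_fun x A V = 0"
  proof (cases "x \<in> V \<and> a \<notin> V")
    case True
    then have "moebius_inv \<Psi> V = 0"
      using V assms upset_sup_mem by (intro moebius_inv_eq_0_if_Pi_map_eq[of _ a "sup x a"]) auto
    then show ?thesis by simp
  qed (use assms(2) in \<open>auto simp: pi_fun_def\<close>)
qed

lemma integ_pi_fun_eq_Pi_map:
  fixes \<Psi> :: "'a::{finite,order} set \<Rightarrow> real"
  assumes "M_inf \<Psi>" "\<And>a. a \<in> set A \<Longrightarrow> Pi_map \<Psi> a = 0"
  shows "integ \<Psi> (pi_fun x A) = Pi_map \<Psi> x"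
proof -
  have "moebius_inv \<Psi> V * pi_fun x A V = (if x \<in> V then moebius_inv \<Psi> V else 0)"
    if "V \<in> upsets" for V
    using that assms moebius_inv_eq_0_if_Pi_map_eq_0 by (auto simp: pi_fun_def)
  then show ?thesis
    unfolding integ_def Pi_map_eq_sum_moebius_inv by (simp add: sum.inter_filter)
qed

lemma finite_paths: "finite (paths (a::'a::finite) b)"
proof (rule finite_subset[OF _ finite_lists_length_le[OF finite_UNIV, of "card (UNIV::'a set)"]])
  show "paths a b \<subseteq> {xs. set xs \<subseteq> UNIV \<and> length xs \<le> card (UNIV::'a set)}"
    by (auto simp: paths_def card_mono simp flip: distinct_card)
qed

lemma paths_self: "paths a a = {[a]}"
  unfolding paths_def
  by (auto, metis distinct.simps(2) hd_Cons_tl last.simps last_in_set)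

lemma path_val_le_hd:
  fixes \<phi> :: "'a::lattice \<Rightarrow> real"
  assumes "mono \<phi>" "H \<noteq> []"
  shows "path_val \<phi> H \<le> \<phi> (hd H)"
proof -
  have "{..<length H} = insert 0 {1..<length H}" using assms(2) by (cases H) auto
  then have "(\<Sum>i<length H. \<phi> (H ! i)) = \<phi> (hd H) + (\<Sum>i\<in>{1..<length H}. \<phi> (H ! i))"
    using assms(2) by (simp add: hd_conv_nth)
  moreover have "(\<Sum>i\<in>{1..<length H}. \<phi> (H ! i)) \<le> (\<Sum>i\<in>{1..<length H}. \<phi> (sup (H ! (i - 1)) (H ! i)))"
    by (intro sum_mono monoD[OF assms(1)]) simp
  ultimately show ?thesis unfolding path_val_def by simp
qed

lemma lam_self: "lam \<phi> (a::'a::{finite,lattice}) a = \<phi> a"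
  by (simp add: lam_def paths_self path_val_def)

lemma Lam_self: "Lam a \<phi> (a::'a::{finite,lattice}) = 0"
  by (simp add: Lam_def lam_self)

lemma lam_eq_of_le:
  fixes \<phi> :: "'a::{finite,lattice} \<Rightarrow> real"
  assumes "mono \<phi>" "a \<le> b"
  shows "lam \<phi> a b = \<phi> a"
proof (cases "a = b")
  case False
  then have "[a, b] \<in> paths a b" by (simp add: paths_def)
  moreover have "path_val \<phi> [a, b] = \<phi> a"
    using assms(2) by (simp add: path_val_def numeral_2_eq_2 lessThan_Suc sup_absorb2)
  moreover have "path_val \<phi> H \<le> \<phi> a" if "H \<in> paths a b" for H
    using that path_val_le_hd[OF assms(1)] by (auto simp: paths_def)
  ultimately show ?thesis
    unfolding lam_def using finite_paths by (intro Max_eqI) (auto simp: image_iff intro: bexI[of _ "[a, b]"])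
qed (simp add: lam_self)

lemma Lam_seq_take_Suc:
  "i < length as \<Longrightarrow> Lam_seq (take (Suc i) as) \<phi> = Lam (as ! i) (Lam_seq (take i as) \<phi>)"
  by (simp add: Lam_seq_def take_Suc_conv_app_nth)

locale Lam_seq_representation =
  fixes \<phi> :: "'a::{finite,lattice} \<Rightarrow> real" and as :: "'a list" and \<Psi> :: "nat \<Rightarrow> 'a set \<Rightarrow> real"
  assumes M_inf: "\<And>i. i \<le> length as \<Longrightarrow> M_inf (\<Psi> i)"
    and Pi_map_lam: "\<And>i. i < length as \<Longrightarrow> Pi_map (\<Psi> i) = lam (Lam_seq (take i as) \<phi>) (as ! i)"
    and Pi_map_last: "Pi_map (\<Psi> (length as)) = Lam_seq as \<phi>"
begin

lemma Lam_seq_take_eq_sum: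
  "i \<le> length as \<Longrightarrow> Lam_seq (take i as) \<phi> x = (\<Sum>j\<in>{i..length as}. Pi_map (\<Psi> j) x)"
proof (induction i rule: inc_induct)
  case base
  then show ?case using Pi_map_last by simp
next
  case (step i)
  have "{i..length as} = insert i {Suc i..length as}" using step.hyps by auto
  then show ?case
    using step Lam_seq_take_Suc[OF step.hyps(2)] Pi_map_lam[OF step.hyps(2)] by (simp add: Lam_def)
qed

lemma mono_Lam_seq_take:
  assumes "i \<le> length as"
  shows "mono (Lam_seq (take i as) \<phi>)"
proof (rule monoI)
  fix x y :: 'a assume "x \<le> y"
  then have "Pi_map (\<Psi> j) x \<le> Pi_map (\<Psi> j) y" if "j \<le> length as" for j
    using that mono_Pi_map[OF M_inf] by (simp add: monoD)
  then show "Lam_seq (take i as) \<phi> x \<le> Lam_seq (take i as) \<phi> y"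
    using assms by (simp add: Lam_seq_take_eq_sum) (rule sum_mono; simp)
qed

lemma Pi_map_nth_eq_0:
  assumes "i < j" "j \<le> length as"
  shows "Pi_map (\<Psi> j) (as ! i) = 0"
proof -
  have "(\<Sum>l\<in>{Suc i..length as}. Pi_map (\<Psi> l) (as ! i)) = 0"
    using assms Lam_seq_take_eq_sum[of "Suc i" "as ! i"] Lam_seq_take_Suc[of i as \<phi>]
    by (simp add: Lam_self)
  then show ?thesis
    using assms Pi_map_nonneg[OF M_inf] by (subst (asm) sum_nonneg_eq_0_iff) auto
qed

lemma Pi_map_sup_eq:
  assumes "i < length as"
  shows "Pi_map (\<Psi> i) (sup y (as ! i)) = Pi_map (\<Psi> i) (as ! i)"
  using assms mono_Lam_seq_take[of i]
  by (simp add: Pi_map_lam lam_eq_of_le lam_self)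

lemma Lam_seq_take_eq_integ:
  assumes "k \<le> length as"
  shows "Lam_seq (take k as) \<phi> x = integ (\<lambda>U. \<Sum>i\<le>length as. \<Psi> i U) (pi_fun x (take k as))"
proof -
  have "{..length as} = {..<k} \<union> {k..length as}" using assms by auto
  then have "integ (\<lambda>U. \<Sum>i\<le>length as. \<Psi> i U) (pi_fun x (take k as))
      = (\<Sum>i<k. integ (\<Psi> i) (pi_fun x (take k as))) + (\<Sum>i\<in>{k..length as}. integ (\<Psi> i) (pi_fun x (take k as)))"
    by (simp add: integ_sum) (subst sum.union_disjoint; auto)
  also have "\<dots> = (\<Sum>i\<in>{k..length as}. Pi_map (\<Psi> i) x)"
  proof -
    have "integ (\<Psi> i) (pi_fun x (take k as)) = 0" if "i < k" for i
      using that assms M_inf Pi_map_sup_eq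
      by (intro integ_pi_fun_eq_0[where a = "as ! i"]) (auto simp: in_set_conv_nth)
    moreover have "integ (\<Psi> i) (pi_fun x (take k as)) = Pi_map (\<Psi> i) x"
      if "k \<le> i" "i \<le> length as" for i
      using that M_inf Pi_map_nth_eq_0
      by (intro integ_pi_fun_eq_Pi_map) (auto simp: in_set_conv_nth)
    ultimately show ?thesis by simp
  qed
  also have "\<dots> = Lam_seq (take k as) \<phi> x"
    using assms by (simp add: Lam_seq_take_eq_sum)
  finally show ?thesis ..
qed

end

theorem theorem3p15:
  fixes \<phi> :: "'a::{finite,lattice} \<Rightarrow> real"
    and as :: "'a list"
    and \<Psi> :: "nat \<Rightarrow> 'a set \<Rightarrow> real"
  assumes "M1 \<phi>"
    and "monotone_path as"
    and "\<forall>i\<le>length as. M_inf (\<Psi> i)"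
    and "\<forall>i<length as. Pi_map (\<Psi> i) = lam (Lam_seq (take i as) \<phi>) (as ! i)"
    and "Pi_map (\<Psi> (length as)) = Lam_seq as \<phi>"
  shows "\<forall>x. \<forall>k\<in>{1..length as}.
           Lam_seq (take k as) \<phi> x = integ (\<lambda>U. \<Sum>i\<le>length as. \<Psi> i U) (pi_fun x (take k as))"
proof -
  interpret Lam_seq_representation \<phi> as \<Psi>
    using assms(3-5) by unfold_locales auto
  show ?thesis
    by (auto intro: Lam_seq_take_eq_integ)
qed

end
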